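(* Consider a planar multiple linear antenna array consisting of $M$ linear sub-arrays. Sub-array $m$ ($m=1,\dots,M$) has $N_m$ elements, with inter-element spacing $d_m>0$, and its $n$-th element ($n=1,\dots,N_m$) is located at $(x_{m,1}+(n-1)d_m,\; y_{m,1})$, where the leading element of the first sub-array is at the origin, $(x_{1,1},y_{1,1})=(0,0)$. For a complex weight vector $\mathbf w=(w_{m,n})$ (not identically zero), the beam pattern is $$f_{\mathbf w}(\theta)=\frac{1}{\sum_{m=1}^{M}\sum_{n=1}^{N_m}|w_{m,n}|}\sum_{m=1}^{M} e^{j2\pi(x_{m,1}\sin\theta+y_{m,1}\cos\theta)/\lambda}\sum_{n=1}^{N_m} w_{m,n}\,e^{j2\pi(n-1)d_m\sin\theta/\lambda},$$ where $\lambda>0$ is the wavelength. Let $\theta$ be an angle and $\mathfrak M(\theta)$ an angle with $\mathfrak M(\theta)\neq\theta$. Then $f_{\mathbf w}(\theta)=f_{\mathbf w}(\mathfrak M(\theta))$ holds for every weight vector $\mathbf w$ (i.e. the beam pattern is periodic at $\theta$ with period mapping $\mathfrak M$) if and only if both of the following hold: (C1) for every $i=1,\dots,M$, $\dfrac{d_i\left(\sin\theta-\sin(\mathfrak M(\theta))\right)}{\lambda}\in\mathbb Z\setminus\{0\}$; (C2) for every $l=2,\dots,M$, $\dfrac{x_{l,1}\left(\sin\theta-\sin(\mathfrak M(\theta))\right)+y_{l,1}\left(\cos\theta-\cos(\mathfrak M(\theta))\right)}{\lambda}\in\mathbb Z$.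
   Context: Angles $\theta$ parametrize far-field directions in the plane via the unit vector $(\sin\theta,\cos\theta)$. Definition (principle of grating lobes): the beam pattern $f_{\mathbf w}(\cdot)$ is called periodic (on an angular interval) if there is a mapping $\mathfrak M$ with $\mathfrak M(\theta)\neq\theta$ and $f_{\mathbf w}(\theta)=f_{\mathbf w}(\mathfrak M(\theta))$ for every weight vector $\mathbf w$ and every $\theta$ in the interval; $\mathfrak M$ is called the period mapping. If the absolute radiation maxima occur within the interval, the pattern is said to exhibit grating lobes. *)

theory Defs
  imports Complex_Main
begin

text \<open>Sub-array m (1..M) has N m elements, spacing d m, leading element at (x m, y m);
  the n-th element (1..N m) sits at (x m + (n-1) d m, y m). lam is the wavelength,
  w m n the complex weights.\<close>
definition beam_pattern ::
  "nat \<Rightarrow> (nat \<Rightarrow> nat) \<Rightarrow> (nat \<Rightarrow> real) \<Rightarrow> (nat \<Rightarrow> real) \<Rightarrow> (nat \<Rightarrow> real) \<Rightarrow> real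
   \<Rightarrow> (nat \<Rightarrow> nat \<Rightarrow> complex) \<Rightarrow> real \<Rightarrow> complex" where
  "beam_pattern M N d x y lam w \<theta> =
     (1 / complex_of_real (\<Sum>m=1..M. \<Sum>n=1..N m. cmod (w m n))) *
     (\<Sum>m=1..M. cis (2 * pi * (x m * sin \<theta> + y m * cos \<theta>) / lam) *
        (\<Sum>n=1..N m. w m n * cis (2 * pi * (real n - 1) * d m * sin \<theta> / lam)))"

end

theory Submission
  imports Defs
begin

text \<open>Writing the beam pattern as \<open>\<Sum> w m n * cis (\<phi> m n t)\<close> with the element phases
  \<open>\<phi>\<close>, and testing with weights supported on a single element, the pattern takes equal values
  at \<open>\<theta>\<close> and \<open>\<theta>'\<close> for all weights iff every phase difference \<open>\<phi> m n \<theta> - \<phi> m n \<theta>'\<close> is a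
  multiple of \<open>2\<pi>\<close>. Divided by \<open>2\<pi>\<close> this difference is the arithmetic progression
  \<open>c\<^sub>2 m + (n - 1) c\<^sub>1 m\<close> in \<open>n\<close>, which, having at least two terms, is integral iff
  \<open>c\<^sub>1 m\<close> and \<open>c\<^sub>2 m\<close> are. Since the leading element of the first sub-array sits at the origin,
  \<open>c\<^sub>2 1 = 0\<close>; and \<open>c\<^sub>1 m \<noteq> 0\<close> because \<open>sin\<close> is injective on \<open>[-\<pi>/2, \<pi>/2]\<close>.\<close>

definition element_phase ::
  "(nat \<Rightarrow> real) \<Rightarrow> (nat \<Rightarrow> real) \<Rightarrow> (nat \<Rightarrow> real) \<Rightarrow> real \<Rightarrow> nat \<Rightarrow> nat \<Rightarrow> real \<Rightarrow> real" where
  "element_phase d x y lam m n t =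
     2 * pi * (x m * sin t + y m * cos t + (real n - 1) * d m * sin t) / lam"

lemma cis_eq_cis_iff_Ints: "cis a = cis b \<longleftrightarrow> (a - b) / (2 * pi) \<in> \<int>"
proof -
  have "cis a = cis b \<longleftrightarrow> sin a = sin b \<and> cos a = cos b"
    by (auto simp: complex_eq_iff)
  also have "\<dots> \<longleftrightarrow> (\<exists>k::int. a = b + 2 * pi * k)"
    by (rule sin_cos_eq_iff)
  also have "\<dots> \<longleftrightarrow> (a - b) / (2 * pi) \<in> \<int>"
    by (auto simp: field_simps elim!: Ints_cases)
  finally show ?thesis .
qed

lemma beam_pattern_conv_element_phase:
  "beam_pattern M N d x y lam w t =
     (1 / complex_of_real (\<Sum>m=1..M. \<Sum>n=1..N m. cmod (w m n))) *
     (\<Sum>m=1..M. \<Sum>n=1..N m. w m n * cis (element_phase d x y lam m n t))"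
proof -
  have "cis (element_phase d x y lam m n t) =
      cis (2 * pi * (x m * sin t + y m * cos t) / lam) * cis (2 * pi * (real n - 1) * d m * sin t / lam)"
    for m n
    by (simp add: element_phase_def cis_mult distrib_left add_divide_distrib mult.assoc)
  then show ?thesis
    by (simp add: beam_pattern_def sum_distrib_left mult_ac)
qed

lemma sum_sum_delta:
  assumes "finite A" "\<And>i. finite (B i)"
  shows "(\<Sum>i\<in>A. \<Sum>j\<in>B i. if i = a \<and> j = b then f i j else 0) =
           (if a \<in> A \<and> b \<in> B a then f a b else 0)"
proof -
  have "(\<Sum>i\<in>A. \<Sum>j\<in>B i. if i = a \<and> j = b then f i j else 0) =
          (\<Sum>i\<in>A. if i = a then \<Sum>j\<in>B a. if j = b then f a j else 0 else 0)"
    by (intro sum.cong) auto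
  then show ?thesis
    using assms by (simp add: sum.delta)
qed

lemma beam_pattern_unit_weight:
  assumes "m \<in> {1..M}" "n \<in> {1..N m}"
  shows "beam_pattern M N d x y lam (\<lambda>i j. if i = m \<and> j = n then 1 else 0) t =
           cis (element_phase d x y lam m n t)"
proof -
  have "(\<Sum>i=1..M. \<Sum>j=1..N i. cmod (if i = m \<and> j = n then 1 else 0 :: complex)) = 1"
    using assms by (simp add: if_distrib[of cmod] sum_sum_delta cong: if_cong)
  moreover have "(\<Sum>i=1..M. \<Sum>j=1..N i. (if i = m \<and> j = n then 1 else 0) *
      cis (element_phase d x y lam i j t)) = cis (element_phase d x y lam m n t)"
    using assms by (simp add: if_distrib[of "\<lambda>z. z * _"] sum_sum_delta cong: if_cong)
  ultimately show ?thesis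
    by (simp add: beam_pattern_conv_element_phase)
qed

lemma beam_pattern_periodic_iff:
  "(\<forall>w. (\<exists>m\<in>{1..M}. \<exists>n\<in>{1..N m}. w m n \<noteq> 0) \<longrightarrow>
        beam_pattern M N d x y lam w t = beam_pattern M N d x y lam w t') \<longleftrightarrow>
   (\<forall>m\<in>{1..M}. \<forall>n\<in>{1..N m}.
        cis (element_phase d x y lam m n t) = cis (element_phase d x y lam m n t'))"
proof
  assume periodic: "\<forall>w. (\<exists>m\<in>{1..M}. \<exists>n\<in>{1..N m}. w m n \<noteq> 0) \<longrightarrow>
    beam_pattern M N d x y lam w t = beam_pattern M N d x y lam w t'"
  show "\<forall>m\<in>{1..M}. \<forall>n\<in>{1..N m}.
    cis (element_phase d x y lam m n t) = cis (element_phase d x y lam m n t')"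
  proof (intro ballI)
    fix m n assume mn: "m \<in> {1..M}" "n \<in> {1..N m}"
    define e :: "nat \<Rightarrow> nat \<Rightarrow> complex" where "e i j = (if i = m \<and> j = n then 1 else 0)" for i j
    have "\<exists>i\<in>{1..M}. \<exists>j\<in>{1..N i}. e i j \<noteq> 0"
      using mn by (auto simp: e_def)
    with periodic have "beam_pattern M N d x y lam e t = beam_pattern M N d x y lam e t'"
      by blast
    then show "cis (element_phase d x y lam m n t) = cis (element_phase d x y lam m n t')"
      unfolding e_def using beam_pattern_unit_weight[of m M n N d x y lam, OF mn] by simp
  qed
next
  assume "\<forall>m\<in>{1..M}. \<forall>n\<in>{1..N m}.
    cis (element_phase d x y lam m n t) = cis (element_phase d x y lam m n t')"
  then have "(\<Sum>m=1..M. \<Sum>n=1..N m. w m n * cis (element_phase d x y lam m n t)) =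
      (\<Sum>m=1..M. \<Sum>n=1..N m. w m n * cis (element_phase d x y lam m n t'))" for w
    by (intro sum.cong refl) auto
  then show "\<forall>w. (\<exists>m\<in>{1..M}. \<exists>n\<in>{1..N m}. w m n \<noteq> 0) \<longrightarrow>
    beam_pattern M N d x y lam w t = beam_pattern M N d x y lam w t'"
    unfolding beam_pattern_conv_element_phase by presburger
qed

lemma element_phase_diff:
  "(element_phase d x y lam m n t - element_phase d x y lam m n t') / (2 * pi) =
     (x m * (sin t - sin t') + y m * (cos t - cos t')) / lam + (real n - 1) * (d m * (sin t - sin t') / lam)"
  unfolding element_phase_def by (simp add: diff_divide_distrib add_divide_distrib algebra_simps)

lemma Ints_arith_progression_iff:
  assumes "2 \<le> k"
  shows "(\<forall>n\<in>{1..k}. a + (real n - 1) * b \<in> \<int>) \<longleftrightarrow> a \<in> \<int> \<and> b \<in> \<int>"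
proof
  assume progression: "\<forall>n\<in>{1..k}. a + (real n - 1) * b \<in> \<int>"
  have "1 \<in> {1..k}" "2 \<in> {1..k}"
    using assms by auto
  then have "a + (real 1 - 1) * b \<in> \<int>" "a + (real 2 - 1) * b \<in> \<int>"
    using progression by blast+
  then have a: "a \<in> \<int>" and "a + b \<in> \<int>"
    by simp_all
  then have "(a + b) - a \<in> \<int>"
    by (intro Ints_diff)
  with a show "a \<in> \<int> \<and> b \<in> \<int>"
    by simp
next
  assume "a \<in> \<int> \<and> b \<in> \<int>"
  then show "\<forall>n\<in>{1..k}. a + (real n - 1) * b \<in> \<int>"
    by (simp add: Ints_add Ints_mult Ints_diff)
qed

theorem theorem1:
  fixes M :: nat and N :: "nat \<Rightarrow> nat" and d x y :: "nat \<Rightarrow> real"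
    and lam \<theta> \<theta>' :: real
  assumes M_pos: "M \<ge> 1"
    and N_ge: "\<And>m. m \<in> {1..M} \<Longrightarrow> N m \<ge> 2"
    and d_pos: "\<And>m. m \<in> {1..M} \<Longrightarrow> d m > 0"
    and origin: "x 1 = 0" "y 1 = 0"
    and lam_pos: "lam > 0"
    and theta_range: "\<theta> \<in> {-pi/2..pi/2}" "\<theta>' \<in> {-pi/2..pi/2}"
    and neq: "\<theta>' \<noteq> \<theta>"
  shows "(\<forall>w :: nat \<Rightarrow> nat \<Rightarrow> complex.
            (\<exists>m\<in>{1..M}. \<exists>n\<in>{1..N m}. w m n \<noteq> 0) \<longrightarrow>
            beam_pattern M N d x y lam w \<theta> = beam_pattern M N d x y lam w \<theta>')
         \<longleftrightarrow>
         ((\<forall>i\<in>{1..M}. d i * (sin \<theta> - sin \<theta>') / lam \<in> \<int> - {0}) \<and>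
          (\<forall>l\<in>{2..M}. (x l * (sin \<theta> - sin \<theta>') + y l * (cos \<theta> - cos \<theta>')) / lam \<in> \<int>))"
proof -
  define c\<^sub>1 where "c\<^sub>1 m = d m * (sin \<theta> - sin \<theta>') / lam" for m
  define c\<^sub>2 where "c\<^sub>2 m = (x m * (sin \<theta> - sin \<theta>') + y m * (cos \<theta> - cos \<theta>')) / lam" for m
  have "sin \<theta> \<noteq> sin \<theta>'"
    using sin_inj_pi[of \<theta> \<theta>'] theta_range neq by auto
  then have c\<^sub>1_nonzero: "c\<^sub>1 m \<noteq> 0" if "m \<in> {1..M}" for m
    using d_pos[OF that] lam_pos by (simp add: c\<^sub>1_def)
  have "{1..M} = insert 1 {2..M}"
    using M_pos by auto
  moreover have "c\<^sub>2 1 = 0"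
    using origin by (simp add: c\<^sub>2_def)
  moreover have "(\<forall>w :: nat \<Rightarrow> nat \<Rightarrow> complex.
            (\<exists>m\<in>{1..M}. \<exists>n\<in>{1..N m}. w m n \<noteq> 0) \<longrightarrow>
            beam_pattern M N d x y lam w \<theta> = beam_pattern M N d x y lam w \<theta>') \<longleftrightarrow>
        (\<forall>m\<in>{1..M}. \<forall>n\<in>{1..N m}. c\<^sub>2 m + (real n - 1) * c\<^sub>1 m \<in> \<int>)"
    unfolding beam_pattern_periodic_iff cis_eq_cis_iff_Ints element_phase_diff c\<^sub>1_def c\<^sub>2_def ..
  moreover have "\<dots> \<longleftrightarrow> (\<forall>m\<in>{1..M}. c\<^sub>2 m \<in> \<int> \<and> c\<^sub>1 m \<in> \<int>)"
    using Ints_arith_progression_iff N_ge by simp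
  ultimately show ?thesis
    using c\<^sub>1_nonzero by (auto simp: c\<^sub>1_def c\<^sub>2_def)
qed

end
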